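(* Let $C\in\mathbb R^{d\times d}$ satisfy Condition A, let $m\ge1$, and let $D^{(m)}\in F^{(m)}$ have a rank-1 decomposition $D^{(m)}=\sum_{k=1}^s\lambda_kv_k^{\otimes m}$ with $s$ equal to the symmetric rank of $D^{(m)}$, $\lambda_k\in\mathbb R$, $v_k\in\mathbb R^d$. Let $D^{(m)}(t)$, $t\ge0$, be the solution of $$\dot D^{(m)}_\alpha=-\sum_{j,l=1}^d\alpha_jC_{jl}\,D^{(m)}_{(\alpha^{(j-)})^{(l+)}},\qquad\alpha\in S^{(m)},$$ with $D^{(m)}(0)=D^{(m)}$. Then $$D^{(m)}(t)=\sum_{k=1}^s\lambda_k[v_k(t)]^{\otimes m},\qquad t>0,$$ where $v_k(t)\in\mathbb R^d$ solves $\dot v_k=-Cv_k$, $v_k(0)=v_k$. Moreover, $D^{(m)}(t)$ has symmetric rank $s$ for all $t>0$.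
   Context: $C_S=\frac12(C+C^T)$; Condition A: $C_S$ positive semi-definite and no non-trivial $C^T$-invariant subspace of $\ker C_S$. $F^{(m)}$ is the space of symmetric $m$-tensors over $\mathbb R^d$ (arrays $(A_{i_1\dots i_m})_{i_r\in\{1,\dots,d\}}$ invariant under permutations of indices). $S^{(m)}=\{\alpha\in\mathbb N_0^d:|\alpha|=m\}$; for $A\in F^{(m)}$ and $\alpha\in S^{(m)}$, $A_\alpha:=A_{i_1\dots i_m}$ for any index with $\#\{r:i_r=k\}=\alpha_k$ for all $k$. For $\alpha\in\mathbb N_0^d$: $\alpha^{(l\pm)}_j=\alpha_j$ ($j\ne l$), $\alpha^{(l\pm)}_l=(\alpha_l\pm1)_+$. $v^{\otimes m}$ is the tensor with entries $v_{i_1}\cdots v_{i_m}$. The symmetric rank of $A\in F^{(m)}$ is the minimal $s$ such that $A=\sum_{k=1}^s\lambda_kv_k^{\otimes m}$ with real $\lambda_k$ and $v_k\in\mathbb R^d$ (such decompositions always exist). *)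

theory Defs
  imports "HOL-Analysis.Analysis" "HOL-Library.Multiset"
begin

text \<open>Dimension d is CARD('n); vectors are real^'n, matrices real^'n^'n.
  An m-tensor is represented as a function on index lists ('n::finite list),
  the entry A_{i_1...i_m} being A [i_1,...,i_m]; by convention it vanishes
  on lists of length different from m.\<close>

definition sym_tensor :: "nat \<Rightarrow> ('n::finite list \<Rightarrow> real) \<Rightarrow> bool" where
  "sym_tensor m A \<longleftrightarrow>
     (\<forall>xs. length xs \<noteq> m \<longrightarrow> A xs = 0) \<and>
     (\<forall>xs ys. length xs = m \<longrightarrow> length ys = m \<longrightarrow> mset xs = mset ys \<longrightarrow> A xs = A ys)"

definition tensor_pow :: "real^'n::finite \<Rightarrow> nat \<Rightarrow> ('n::finite list \<Rightarrow> real)" where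
  "tensor_pow v m = (\<lambda>xs. if length xs = m then prod_list (map (\<lambda>i. v $ i) xs) else 0)"

definition multi_indices :: "nat \<Rightarrow> ('n::finite \<Rightarrow> nat) set" where
  "multi_indices m = {\<alpha>. (\<Sum>k\<in>UNIV. \<alpha> k) = m}"

definition tensor_entry :: "('n::finite list \<Rightarrow> real) \<Rightarrow> ('n \<Rightarrow> nat) \<Rightarrow> real" where
  "tensor_entry A \<alpha> = A (SOME xs. \<forall>k. count (mset xs) k = \<alpha> k)"

definition idx_minus :: "('n::finite \<Rightarrow> nat) \<Rightarrow> 'n \<Rightarrow> ('n \<Rightarrow> nat)" where
  "idx_minus \<alpha> l = \<alpha>(l := \<alpha> l - 1)"

definition idx_plus :: "('n::finite \<Rightarrow> nat) \<Rightarrow> 'n \<Rightarrow> ('n \<Rightarrow> nat)" where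
  "idx_plus \<alpha> l = \<alpha>(l := \<alpha> l + 1)"

definition sym_rank :: "nat \<Rightarrow> ('n::finite list \<Rightarrow> real) \<Rightarrow> nat" where
  "sym_rank m A = (LEAST s. \<exists>(lam::nat \<Rightarrow> real) (v::nat \<Rightarrow> real^'n).
        A = (\<lambda>xs. \<Sum>k<s. lam k * tensor_pow (v k) m xs))"

definition sym_part :: "real^'n::finite^'n \<Rightarrow> real^'n^'n" where
  "sym_part C = (1/2) *\<^sub>R (C + transpose C)"

definition condition_A :: "real^'n::finite^'n \<Rightarrow> bool" where
  "condition_A C \<longleftrightarrow>
     (\<forall>x. x \<bullet> (sym_part C *v x) \<ge> 0) \<and>
     (\<forall>U. subspace U \<longrightarrow> U \<subseteq> {x. sym_part C *v x = 0} \<longrightarrow>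
          (\<forall>x\<in>U. transpose C *v x \<in> U) \<longrightarrow> U = {0})"

end

theory Submission
  imports Defs
begin

text \<open>Each entry of \<open>\<Sum>\<^sub>k \<lambda>\<^sub>k v\<^sub>k(t)\<^sup>\<otimes>\<^sup>m\<close> is a monomial in the coordinates of the
  \<open>v\<^sub>k(t)\<close>, and differentiating it along \<open>v' = -Cv\<close> produces exactly the right-hand side of the
  tensor equation. Hence this tensor and \<open>D(t)\<close> solve the same linear system, and a Gronwall
  estimate for the sum of the squared differences of their entries over \<open>S\<^sup>(\<^sup>m\<^sup>)\<close> shows that
  they coincide.

  For the rank, the same estimate run backwards in time shows that a solution of \<open>v' = -Cv\<close>
  vanishing at time \<open>t\<close> vanishes at \<open>0\<close>, so \<open>w(t) \<mapsto> w(0)\<close> extends to a linear map \<open>L\<close>.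
  Applying \<open>L\<close> to a decomposition of \<open>D(t)\<close> with \<open>r\<close> terms gives one of \<open>D\<^sup>(\<^sup>m\<^sup>)\<close> with
  \<open>r\<close> terms, so \<open>r \<ge> s\<close>.\<close>

section \<open>Gronwall-type uniqueness\<close>

lemma nondecreasing_if_deriv_nonneg_Icc:
  fixes f f' :: "real \<Rightarrow> real"
  assumes "a \<le> b"
    and "\<And>\<tau>. \<tau> \<in> {a..b} \<Longrightarrow> (f has_real_derivative f' \<tau>) (at \<tau> within {a..b})"
    and "\<And>\<tau>. \<tau> \<in> {a..b} \<Longrightarrow> 0 \<le> f' \<tau>"
  shows "f a \<le> f b"
proof -
  obtain \<xi> where "\<xi> \<in> {a..b}" "f b - f a = f' \<xi> * (b - a)"
    using mvt_very_simple[of a b f "\<lambda>\<tau> d. f' \<tau> * d"] assms(1,2)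
    by (auto simp: has_field_derivative_def)
  moreover have "0 \<le> f' \<xi> * (b - a)"
    using assms(1,3) \<open>\<xi> \<in> {a..b}\<close> by simp
  ultimately show ?thesis by simp
qed

lemma gronwall_vanishing:
  fixes g g' :: "real \<Rightarrow> real"
  assumes deriv: "\<And>\<tau>. \<tau> \<in> {a..b} \<Longrightarrow> (g has_real_derivative g' \<tau>) (at \<tau> within {a..b})"
    and growth: "\<And>\<tau>. \<tau> \<in> {a..b} \<Longrightarrow> \<bar>g' \<tau>\<bar> \<le> K * g \<tau>"
    and nonneg: "\<And>\<tau>. \<tau> \<in> {a..b} \<Longrightarrow> 0 \<le> g \<tau>"
    and x: "x \<in> {a..b}" and gx: "g x = 0" and y: "y \<in> {a..b}"
  shows "g y = 0"
proof -
  have deriv_weighted: "((\<lambda>\<tau>. g \<tau> * exp (c * \<tau>)) has_real_derivative (g' \<tau> + c * g \<tau>) * exp (c * \<tau>))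
      (at \<tau> within {p..q})" if "{p..q} \<subseteq> {a..b}" "\<tau> \<in> {p..q}" for p q c \<tau>
    using DERIV_subset[OF deriv that(1)] that by (auto intro!: derivative_eq_intros simp: algebra_simps)
  have "\<exists>c. g y * exp (c * y) \<le> g x * exp (c * x)"
  proof (cases "x \<le> y")
    case True
    have "- (g y * exp (- K * y)) \<ge> - (g x * exp (- K * x))"
    proof (rule nondecreasing_if_deriv_nonneg_Icc[OF True])
      fix \<tau> assume "\<tau> \<in> {x..y}"
      with x y show "((\<lambda>\<tau>. - (g \<tau> * exp (- K * \<tau>))) has_real_derivative
          - ((g' \<tau> + - K * g \<tau>) * exp (- K * \<tau>))) (at \<tau> within {x..y})"
        by (intro DERIV_minus deriv_weighted) auto
      show "0 \<le> - ((g' \<tau> + - K * g \<tau>) * exp (- K * \<tau>))"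
        using growth[of \<tau>] \<open>\<tau> \<in> {x..y}\<close> x y by (simp add: mult_nonpos_nonneg abs_le_iff)
    qed
    then show ?thesis by (intro exI[of _ "- K"]) simp
  next
    case False
    have "g y * exp (K * y) \<le> g x * exp (K * x)"
    proof (rule nondecreasing_if_deriv_nonneg_Icc[of y x "\<lambda>\<tau>. g \<tau> * exp (K * \<tau>)"])
      show "y \<le> x" using False by simp
      fix \<tau> assume "\<tau> \<in> {y..x}"
      with x y show "((\<lambda>\<tau>. g \<tau> * exp (K * \<tau>)) has_real_derivative
          (g' \<tau> + K * g \<tau>) * exp (K * \<tau>)) (at \<tau> within {y..x})"
        by (intro deriv_weighted) auto
      show "0 \<le> (g' \<tau> + K * g \<tau>) * exp (K * \<tau>)"
        using growth[of \<tau>] \<open>\<tau> \<in> {y..x}\<close> x y by (simp add: abs_le_iff)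
    qed
    then show ?thesis by auto
  qed
  then have "g y \<le> 0" using gx by (auto simp: mult_le_0_iff)
  with nonneg[OF y] show ?thesis by simp
qed

lemma abs_mult_le_if_squares_le:
  fixes a b g :: real
  assumes "a\<^sup>2 \<le> g" "b\<^sup>2 \<le> g"
  shows "\<bar>a * b\<bar> \<le> g"
proof -
  have "2 * \<bar>a * b\<bar> \<le> a\<^sup>2 + b\<^sup>2"
    using sum_squares_bound[of "\<bar>a\<bar>" "\<bar>b\<bar>"] by (simp add: abs_mult)
  with assms show ?thesis by simp
qed

definition linear_ode_solution :: "('a::real_normed_vector \<Rightarrow> 'a) \<Rightarrow> (real \<Rightarrow> 'a) \<Rightarrow> bool" where
  "linear_ode_solution A w \<longleftrightarrow> (\<forall>\<tau>\<ge>0. (w has_vector_derivative A (w \<tau>)) (at \<tau> within {0..}))"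

lemma linear_ode_solution_add:
  "linear A \<Longrightarrow> linear_ode_solution A w1 \<Longrightarrow> linear_ode_solution A w2 \<Longrightarrow>
    linear_ode_solution A (\<lambda>\<tau>. w1 \<tau> + w2 \<tau>)"
  unfolding linear_ode_solution_def by (auto intro!: derivative_eq_intros simp: linear_add)

lemma linear_ode_solution_scaleR:
  "linear A \<Longrightarrow> linear_ode_solution A w \<Longrightarrow> linear_ode_solution A (\<lambda>\<tau>. c *\<^sub>R w \<tau>)"
  unfolding linear_ode_solution_def by (auto intro!: derivative_eq_intros simp: linear_scale)

lemma linear_ode_vanishing:
  fixes A :: "'a::euclidean_space \<Rightarrow> 'a"
  assumes "linear A" and sol: "linear_ode_solution A w"
    and "0 \<le> x" "w x = 0" "0 \<le> y"
  shows "w y = 0"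
proof -
  obtain K where K: "\<And>z. norm (A z) \<le> norm z * K"
    using \<open>linear A\<close> by (metis bounded_linear.bounded linear_conv_bounded_linear)
  define b where "b = max x y"
  have "w y \<bullet> w y = 0"
  proof (rule gronwall_vanishing[where g = "\<lambda>\<tau>. w \<tau> \<bullet> w \<tau>" and K = "2 * K"])
    fix \<tau> :: real assume \<tau>: "\<tau> \<in> {0..b}"
    with sol have "(w has_vector_derivative A (w \<tau>)) (at \<tau> within {0..b})"
      unfolding linear_ode_solution_def by (auto intro: has_vector_derivative_within_subset)
    then show "((\<lambda>\<tau>. w \<tau> \<bullet> w \<tau>) has_real_derivative 2 * (w \<tau> \<bullet> A (w \<tau>))) (at \<tau> within {0..b})"
      using bounded_bilinear.has_vector_derivative[OF bounded_bilinear_inner]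
      by (fastforce simp: has_real_derivative_iff_has_vector_derivative inner_commute)
    have "\<bar>w \<tau> \<bullet> A (w \<tau>)\<bar> \<le> norm (w \<tau>) * (norm (w \<tau>) * K)"
      using Cauchy_Schwarz_ineq2 K by (metis mult_left_mono norm_ge_zero order_trans)
    then show "\<bar>2 * (w \<tau> \<bullet> A (w \<tau>))\<bar> \<le> 2 * K * (w \<tau> \<bullet> w \<tau>)"
      by (simp add: abs_mult power2_norm_eq_inner[symmetric] power2_eq_square mult_ac)
  qed (use \<open>0 \<le> x\<close> \<open>w x = 0\<close> \<open>0 \<le> y\<close> b_def in auto)
  then show ?thesis by simp
qed

text \<open>The pairs (w t, w 0) of solutions form a subspace on which the first projection is injective
  by backward uniqueness; a linear left inverse of that projection gives the backward flow.\<close>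

lemma linear_ode_backward_map:
  fixes A :: "'a::euclidean_space \<Rightarrow> 'a"
  assumes "linear A" and "0 \<le> t"
  obtains L where "linear L" and "\<And>w. linear_ode_solution A w \<Longrightarrow> L (w t) = w 0"
proof -
  define R where "R = {(w t, w 0) | w. linear_ode_solution A w}"
  have "subspace R"
    unfolding subspace_def R_def
  proof (intro conjI ballI allI)
    have "linear_ode_solution A (\<lambda>_. 0)"
      unfolding linear_ode_solution_def using linear_0[OF \<open>linear A\<close>] by auto
    then show "0 \<in> {(w t, w 0) |w. linear_ode_solution A w}"
      by (force simp: zero_prod_def)
  qed (force dest: linear_ode_solution_add[OF \<open>linear A\<close>] linear_ode_solution_scaleR[OF \<open>linear A\<close>]
      simp: plus_prod_def scaleR_prod_def)+
  moreover have "inj_on fst R"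
  proof (rule inj_onI)
    fix p q assume "p \<in> R" "q \<in> R" "fst p = fst q"
    then obtain w1 w2 where sol: "linear_ode_solution A w1" "linear_ode_solution A w2"
      and "p = (w1 t, w1 0)" "q = (w2 t, w2 0)" "w1 t = w2 t"
      unfolding R_def by auto
    moreover have "linear_ode_solution A (\<lambda>\<tau>. w1 \<tau> + (- 1) *\<^sub>R w2 \<tau>)"
      using sol by (intro linear_ode_solution_add linear_ode_solution_scaleR \<open>linear A\<close>)
    ultimately have "w1 0 - w2 0 = 0"
      using linear_ode_vanishing[OF \<open>linear A\<close>, of _ t 0] \<open>0 \<le> t\<close> by fastforce
    with \<open>p = (w1 t, w1 0)\<close> \<open>q = (w2 t, w2 0)\<close> \<open>w1 t = w2 t\<close> show "p = q" by simp
  qed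
  ultimately obtain g where "linear g" "\<forall>p\<in>R. g (fst p) = p"
    using linear_exists_left_inverse_on[OF linear_fst] by blast
  show ?thesis
  proof (rule that[of "snd \<circ> g"])
    show "linear (snd \<circ> g)" using \<open>linear g\<close> linear_snd by (rule linear_compose)
    fix w assume "linear_ode_solution A w"
    then have "(w t, w 0) \<in> R" unfolding R_def by auto
    with \<open>\<forall>p\<in>R. g (fst p) = p\<close> show "(snd \<circ> g) (w t) = w 0" by force
  qed
qed

section \<open>Entries of symmetric tensors\<close>

definition index_list :: "('n::finite \<Rightarrow> nat) \<Rightarrow> 'n list" where
  "index_list \<beta> = (SOME xs. \<forall>k. count (mset xs) k = \<beta> k)"

lemma count_mset_index_list: "count (mset (index_list \<beta>)) = \<beta>"
proof -
  obtain xs where xs: "mset xs = (\<Sum>k\<in>UNIV. replicate_mset (\<beta> k) k)"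
    using ex_mset by blast
  have "\<exists>xs. \<forall>k. count (mset xs) k = \<beta> k"
    by (rule exI[of _ xs]) (simp add: xs count_sum)
  from someI_ex[OF this] show ?thesis
    unfolding index_list_def by (simp add: fun_eq_iff)
qed

lemma length_eq_sum_count: "length xs = (\<Sum>k\<in>UNIV. count (mset (xs::'n::finite list)) k)"
  using sum_count_set[of xs UNIV] by (simp add: count_mset)

lemma length_index_list: "length (index_list \<beta>) = sum \<beta> UNIV"
  by (simp add: length_eq_sum_count[of "index_list \<beta>"] count_mset_index_list)

lemma tensor_entry_index_list: "tensor_entry A \<beta> = A (index_list \<beta>)"
  unfolding tensor_entry_def index_list_def ..

lemma tensor_entry_sum:
  "tensor_entry (\<lambda>xs. \<Sum>k\<in>I. c k * A k xs) \<beta> = (\<Sum>k\<in>I. c k * tensor_entry (A k) \<beta>)"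
  by (simp add: tensor_entry_index_list)

lemma tensor_entry_diff: "tensor_entry (\<lambda>xs. A xs - B xs) \<beta> = tensor_entry A \<beta> - tensor_entry B \<beta>"
  by (simp add: tensor_entry_index_list)

lemma sym_tensor_diff:
  assumes "sym_tensor m A" "sym_tensor m B"
  shows "sym_tensor m (\<lambda>xs. A xs - B xs)"
  unfolding sym_tensor_def
proof (intro conjI allI impI)
  fix xs :: "'a list"
  assume "length xs \<noteq> m"
  with assms have "A xs = 0" "B xs = 0" unfolding sym_tensor_def by blast+
  then show "A xs - B xs = 0" by simp
next
  fix xs ys :: "'a list"
  assume "length xs = m" "length ys = m" "mset xs = mset ys"
  with assms have "A xs = A ys" "B xs = B ys" unfolding sym_tensor_def by blast+
  then show "A xs - B xs = A ys - B ys" by simp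
qed

lemma sym_tensor_eq_tensor_entry:
  assumes "sym_tensor m A" "length xs = m"
  shows "A xs = tensor_entry A (count (mset xs))"
proof -
  have "mset (index_list (count (mset xs))) = mset xs"
    by (rule multiset_eqI) (simp add: count_mset_index_list)
  with assms show ?thesis
    unfolding tensor_entry_index_list sym_tensor_def by (metis size_mset)
qed

lemma tensor_entry_eq_0:
  assumes "sym_tensor m A" "sum \<beta> UNIV \<noteq> m"
  shows "tensor_entry A \<beta> = 0"
  using assms unfolding tensor_entry_index_list sym_tensor_def by (simp add: length_index_list)

lemma sym_tensor_eqI:
  fixes A B :: "'n::finite list \<Rightarrow> real"
  assumes "sym_tensor m A" "sym_tensor m B"
    and "\<And>\<beta>. \<beta> \<in> multi_indices m \<Longrightarrow> tensor_entry A \<beta> = tensor_entry B \<beta>"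
  shows "A = B"
proof
  fix xs :: "'n list"
  show "A xs = B xs"
  proof (cases "length xs = m")
    case True
    then have "count (mset xs) \<in> multi_indices m"
      by (simp add: multi_indices_def length_eq_sum_count)
    with True assms show ?thesis by (simp add: sym_tensor_eq_tensor_entry)
  next
    case False
    with assms(1,2) show ?thesis by (simp add: sym_tensor_def)
  qed
qed

lemma finite_multi_indices: "finite (multi_indices m :: ('n::finite \<Rightarrow> nat) set)"
proof (rule finite_subset)
  show "multi_indices m \<subseteq> (PiE UNIV (\<lambda>_. {..m}) :: ('n \<Rightarrow> nat) set)"
  proof
    fix \<beta> :: "'n \<Rightarrow> nat" assume "\<beta> \<in> multi_indices m"
    then have "\<beta> k \<le> m" for k
      using member_le_sum[of k UNIV \<beta>] by (simp add: multi_indices_def)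
    then show "\<beta> \<in> PiE UNIV (\<lambda>_. {..m})" by (simp add: PiE_UNIV_domain)
  qed
qed (simp add: finite_PiE)

definition vec_monomial :: "real^'n::finite \<Rightarrow> ('n \<Rightarrow> nat) \<Rightarrow> real" where
  "vec_monomial w \<beta> = (\<Prod>i\<in>UNIV. (w $ i) ^ \<beta> i)"

lemma vec_monomial_upd_Suc: "vec_monomial w (\<gamma>(l := Suc (\<gamma> l))) = w $ l * vec_monomial w \<gamma>"
proof -
  have "vec_monomial w (\<gamma>(l := Suc (\<gamma> l))) = (\<Prod>i\<in>UNIV. (if i = l then w $ i else 1) * (w $ i) ^ \<gamma> i)"
    unfolding vec_monomial_def by (rule prod.cong) auto
  then show ?thesis
    by (simp add: prod.distrib vec_monomial_def)
qed

lemma vec_monomial_idx_plus: "vec_monomial w (idx_plus \<gamma> l) = w $ l * vec_monomial w \<gamma>"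
  unfolding idx_plus_def using vec_monomial_upd_Suc by simp

lemma prod_list_map_vec_nth: "prod_list (map (($) w) xs) = vec_monomial w (count (mset xs))"
proof (induction xs)
  case Nil
  then show ?case by (simp add: vec_monomial_def)
next
  case (Cons a xs)
  have "count (mset (a # xs)) = (count (mset xs))(a := Suc (count (mset xs) a))"
    by auto
  then have "vec_monomial w (count (mset (a # xs))) = w $ a * vec_monomial w (count (mset xs))"
    by (simp only: vec_monomial_upd_Suc)
  with Cons.IH show ?case by (simp only: list.map prod_list.Cons)
qed

lemma has_real_derivative_vec_monomial:
  fixes w :: "real \<Rightarrow> real^'n::finite"
  assumes "(w has_vector_derivative w') (at t within S)"
  shows "((\<lambda>\<tau>. vec_monomial (w \<tau>) \<beta>) has_real_derivative
           (\<Sum>j\<in>UNIV. real (\<beta> j) * w' $ j * vec_monomial (w t) (idx_minus \<beta> j))) (at t within S)"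
proof -
  have "((\<lambda>\<tau>. w \<tau> $ i) has_real_derivative w' $ i) (at t within S)" for i
    using bounded_linear.has_vector_derivative[OF bounded_linear_vec_nth assms]
    by (simp add: has_real_derivative_iff_has_vector_derivative)
  then have "((\<lambda>\<tau>. (w \<tau> $ i) ^ \<beta> i) has_real_derivative
      real (\<beta> i) * w' $ i * (w t $ i) ^ (\<beta> i - 1)) (at t within S)" for i
    by (auto intro!: derivative_eq_intros)
  then have "((\<lambda>\<tau>. \<Prod>i\<in>UNIV. (w \<tau> $ i) ^ \<beta> i) has_derivative (\<lambda>h.
      \<Sum>i\<in>UNIV. real (\<beta> i) * w' $ i * (w t $ i) ^ (\<beta> i - 1) * h * (\<Prod>j\<in>UNIV - {i}. (w t $ j) ^ \<beta> j)))
      (at t within S)"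
    by (intro has_derivative_prod) (simp add: has_field_derivative_def)
  then have "((\<lambda>\<tau>. \<Prod>i\<in>UNIV. (w \<tau> $ i) ^ \<beta> i) has_real_derivative
      (\<Sum>i\<in>UNIV. real (\<beta> i) * w' $ i * ((w t $ i) ^ (\<beta> i - 1) * (\<Prod>j\<in>UNIV - {i}. (w t $ j) ^ \<beta> j))))
      (at t within S)"
    by (rule has_derivative_imp_has_field_derivative) (simp add: sum_distrib_left mult_ac)
  moreover have "(w t $ i) ^ (\<beta> i - 1) * (\<Prod>j\<in>UNIV - {i}. (w t $ j) ^ \<beta> j)
      = vec_monomial (w t) (idx_minus \<beta> i)" for i
    unfolding vec_monomial_def idx_minus_def
    by (simp add: prod.remove[of UNIV i] prod.cong[of "UNIV - {i}" _ "\<lambda>j. (w t $ j) ^ (\<beta>(i := \<beta> i - 1)) j"])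
  ultimately show ?thesis
    unfolding vec_monomial_def by simp
qed

lemma tensor_entry_tensor_pow:
  "tensor_entry (tensor_pow w m) \<beta> = (if sum \<beta> UNIV = m then vec_monomial w \<beta> else 0)"
  unfolding tensor_entry_index_list tensor_pow_def length_index_list prod_list_map_vec_nth
  by (simp add: count_mset_index_list)

lemma sym_tensor_tensor_pow_sum: "sym_tensor m (\<lambda>xs. \<Sum>k<s. lam k * tensor_pow (u k) m xs)"
  unfolding sym_tensor_def tensor_pow_def prod_list_map_vec_nth by simp

lemma sum_fun_upd_UNIV:
  "sum (f(x := y)) (UNIV :: 'a::finite set) + f x = sum f UNIV + (y :: 'b::comm_monoid_add)"
  by (simp add: sum.remove[of UNIV x] add_ac)

lemma sum_idx_plus: "sum (idx_plus \<gamma> l) UNIV = Suc (sum \<gamma> UNIV)"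
  using sum_fun_upd_UNIV[of \<gamma> l "Suc (\<gamma> l)"] unfolding idx_plus_def by simp

lemma Suc_sum_idx_minus: "\<alpha> j \<noteq> 0 \<Longrightarrow> Suc (sum (idx_minus \<alpha> j) UNIV) = sum \<alpha> UNIV"
  using sum_fun_upd_UNIV[of \<alpha> j "\<alpha> j - 1"] unfolding idx_minus_def by simp

section \<open>The tensor equation\<close>

definition tensor_rhs :: "real^'n::finite^'n \<Rightarrow> ('n list \<Rightarrow> real) \<Rightarrow> ('n \<Rightarrow> nat) \<Rightarrow> real" where
  "tensor_rhs C A \<alpha> =
     - (\<Sum>j\<in>UNIV. \<Sum>l\<in>UNIV. real (\<alpha> j) * C $ j $ l * tensor_entry A (idx_plus (idx_minus \<alpha> j) l))"

definition tensor_ode_solution :: "real^'n::finite^'n \<Rightarrow> nat \<Rightarrow> (real \<Rightarrow> 'n list \<Rightarrow> real) \<Rightarrow> bool" where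
  "tensor_ode_solution C m D \<longleftrightarrow> (\<forall>t\<ge>0. sym_tensor m (D t) \<and>
     (\<forall>\<alpha>\<in>multi_indices m.
        ((\<lambda>\<tau>. tensor_entry (D \<tau>) \<alpha>) has_real_derivative tensor_rhs C (D t) \<alpha>) (at t within {0..})))"

lemma tensor_ode_solutionD:
  assumes "tensor_ode_solution C m D" "0 \<le> t"
  shows "sym_tensor m (D t)"
    and "\<alpha> \<in> multi_indices m \<Longrightarrow>
      ((\<lambda>\<tau>. tensor_entry (D \<tau>) \<alpha>) has_real_derivative tensor_rhs C (D t) \<alpha>) (at t within {0..})"
  using assms unfolding tensor_ode_solution_def by auto

lemma tensor_rhs_sum:
  "tensor_rhs C (\<lambda>xs. \<Sum>k\<in>I. c k * A k xs) \<alpha> = (\<Sum>k\<in>I. c k * tensor_rhs C (A k) \<alpha>)"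
proof -
  let ?f = "\<lambda>k j l. c k * (real (\<alpha> j) * C $ j $ l * tensor_entry (A k) (idx_plus (idx_minus \<alpha> j) l))"
  have "(\<Sum>j\<in>UNIV. \<Sum>l\<in>UNIV. \<Sum>k\<in>I. ?f k j l) = (\<Sum>j\<in>UNIV. \<Sum>k\<in>I. \<Sum>l\<in>UNIV. ?f k j l)"
    by (rule sum.cong[OF refl], rule sum.swap)
  also have "\<dots> = (\<Sum>k\<in>I. \<Sum>j\<in>UNIV. \<Sum>l\<in>UNIV. ?f k j l)"
    by (rule sum.swap)
  finally show ?thesis
    unfolding tensor_rhs_def tensor_entry_sum
    by (simp add: sum_distrib_left sum_negf mult_ac)
qed

lemma tensor_rhs_diff: "tensor_rhs C (\<lambda>xs. A xs - B xs) \<alpha> = tensor_rhs C A \<alpha> - tensor_rhs C B \<alpha>"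
  unfolding tensor_rhs_def tensor_entry_diff
  by (simp add: right_diff_distrib sum_subtractf)

lemma tensor_rhs_tensor_pow:
  "tensor_rhs C (tensor_pow w m) \<beta> = (if sum \<beta> UNIV = m
     then - (\<Sum>j\<in>UNIV. real (\<beta> j) * (C *v w) $ j * vec_monomial w (idx_minus \<beta> j)) else 0)"
proof -
  have "(\<Sum>l\<in>UNIV. real (\<beta> j) * C $ j $ l * tensor_entry (tensor_pow w m) (idx_plus (idx_minus \<beta> j) l))
      = (if sum \<beta> UNIV = m then real (\<beta> j) * (C *v w) $ j * vec_monomial w (idx_minus \<beta> j) else 0)"
    for j
  proof (cases "\<beta> j = 0")
    case False
    then show ?thesis
      by (simp add: sum_idx_plus Suc_sum_idx_minus tensor_entry_tensor_pow vec_monomial_idx_plus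
          matrix_vector_mult_def sum_distrib_left sum_distrib_right mult_ac)
  qed simp
  then show ?thesis
    unfolding tensor_rhs_def by simp
qed

lemma has_real_derivative_tensor_entry_tensor_pow:
  assumes "(u has_vector_derivative - (C *v u t)) (at t within S)"
  shows "((\<lambda>\<tau>. tensor_entry (tensor_pow (u \<tau>) m) \<beta>) has_real_derivative
           tensor_rhs C (tensor_pow (u t) m) \<beta>) (at t within S)"
proof (cases "sum \<beta> UNIV = m")
  case True
  then show ?thesis
    using has_real_derivative_vec_monomial[OF assms, of \<beta>]
    by (simp add: tensor_entry_tensor_pow tensor_rhs_tensor_pow sum_negf)
next
  case False
  then show ?thesis
    by (simp add: tensor_entry_tensor_pow tensor_rhs_tensor_pow)
qed

lemma tensor_ode_solution_tensor_pow_sum: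
  assumes "\<And>k. k < s \<Longrightarrow> linear_ode_solution (\<lambda>x. - (C *v x)) (u k)"
  shows "tensor_ode_solution C m (\<lambda>t xs. \<Sum>k<s. lam k * tensor_pow (u k t) m xs)"
  unfolding tensor_ode_solution_def tensor_entry_sum tensor_rhs_sum
  using assms unfolding linear_ode_solution_def by (auto intro!: DERIV_sum DERIV_cmult has_real_derivative_tensor_entry_tensor_pow
      simp: sym_tensor_tensor_pow_sum)

definition tensor_sq_norm :: "nat \<Rightarrow> ('n::finite list \<Rightarrow> real) \<Rightarrow> real" where
  "tensor_sq_norm m A = (\<Sum>\<beta>\<in>multi_indices m. (tensor_entry A \<beta>)\<^sup>2)"

lemma tensor_sq_norm_nonneg: "0 \<le> tensor_sq_norm m A"
  unfolding tensor_sq_norm_def by (simp add: sum_nonneg)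

lemma tensor_entry_sq_le_sq_norm:
  assumes "sym_tensor m A"
  shows "(tensor_entry A \<gamma>)\<^sup>2 \<le> tensor_sq_norm m A"
proof (cases "\<gamma> \<in> multi_indices m")
  case True
  then show ?thesis
    unfolding tensor_sq_norm_def by (intro member_le_sum) (simp_all add: finite_multi_indices)
next
  case False
  with assms have "tensor_entry A \<gamma> = 0"
    by (intro tensor_entry_eq_0) (auto simp: multi_indices_def)
  then show ?thesis by (simp add: tensor_sq_norm_nonneg)
qed

lemma sym_tensor_eq_0_if_sq_norm_eq_0:
  fixes A :: "'n::finite list \<Rightarrow> real"
  assumes "sym_tensor m A" "tensor_sq_norm m A = 0"
  shows "A = (\<lambda>_. 0)"
proof (rule sym_tensor_eqI[OF assms(1)])
  show "sym_tensor m (\<lambda>_. 0)"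
    by (simp add: sym_tensor_def)
  fix \<beta> :: "'n \<Rightarrow> nat" assume "\<beta> \<in> multi_indices m"
  with assms(2) show "tensor_entry A \<beta> = tensor_entry (\<lambda>_. 0) \<beta>"
    unfolding tensor_sq_norm_def
    by (simp add: sum_nonneg_eq_0_iff finite_multi_indices tensor_entry_index_list)
qed

lemma abs_tensor_entry_mult_tensor_rhs_le:
  assumes "sym_tensor m A"
  shows "\<bar>2 * tensor_entry A \<beta> * tensor_rhs C A \<beta>\<bar>
    \<le> (\<Sum>j\<in>UNIV. \<Sum>l\<in>UNIV. 2 * \<bar>real (\<beta> j) * C $ j $ l\<bar>) * tensor_sq_norm m A"
proof -
  let ?E = "tensor_entry A" and ?N = "tensor_sq_norm m A"
  let ?c = "\<lambda>j l. real (\<beta> j) * C $ j $ l" and ?\<gamma> = "\<lambda>j l. idx_plus (idx_minus \<beta> j) l"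
  have "\<bar>2 * ?E \<beta> * tensor_rhs C A \<beta>\<bar>
      = \<bar>\<Sum>j\<in>UNIV. \<Sum>l\<in>UNIV. 2 * ?c j l * (?E \<beta> * ?E (?\<gamma> j l))\<bar>"
    unfolding tensor_rhs_def by (simp add: sum_distrib_left mult_ac)
  also have "\<dots> \<le> (\<Sum>j\<in>UNIV. \<Sum>l\<in>UNIV. \<bar>2 * ?c j l * (?E \<beta> * ?E (?\<gamma> j l))\<bar>)"
    by (rule order_trans[OF sum_abs sum_mono[OF sum_abs]])
  also have "\<dots> \<le> (\<Sum>j\<in>UNIV. \<Sum>l\<in>UNIV. 2 * \<bar>?c j l\<bar> * ?N)"
  proof (intro sum_mono)
    fix j l
    have "\<bar>?E \<beta> * ?E (?\<gamma> j l)\<bar> \<le> ?N"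
      using assms by (intro abs_mult_le_if_squares_le tensor_entry_sq_le_sq_norm)
    from mult_left_mono[OF this, of "2 * \<bar>?c j l\<bar>"]
    show "\<bar>2 * ?c j l * (?E \<beta> * ?E (?\<gamma> j l))\<bar> \<le> 2 * \<bar>?c j l\<bar> * ?N"
      by (simp add: abs_mult)
  qed
  finally show ?thesis
    by (simp add: sum_distrib_right)
qed

lemma tensor_ode_vanishing:
  assumes sol: "tensor_ode_solution C m F" and init: "F 0 = (\<lambda>_. 0)" and "0 \<le> t"
  shows "F t = (\<lambda>_. 0)"
proof -
  let ?S = "multi_indices m" and ?N = "\<lambda>\<tau>. tensor_sq_norm m (F \<tau>)"
  define K where "K = (\<Sum>\<beta>\<in>?S. \<Sum>j\<in>UNIV. \<Sum>l\<in>UNIV. 2 * \<bar>real (\<beta> j) * C $ j $ l\<bar>)"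
  have "?N t = 0"
  proof (rule gronwall_vanishing[where g = ?N and a = 0 and b = t and x = 0 and K = K])
    fix \<tau> assume \<tau>: "\<tau> \<in> {0..t}"
    then have sym: "sym_tensor m (F \<tau>)"
      by (intro tensor_ode_solutionD(1)[OF sol]) simp
    have "((\<lambda>\<tau>. tensor_entry (F \<tau>) \<beta>) has_real_derivative tensor_rhs C (F \<tau>) \<beta>) (at \<tau> within {0..t})"
      if "\<beta> \<in> ?S" for \<beta>
      using DERIV_subset[OF tensor_ode_solutionD(2)[OF sol _ that], of \<tau> "{0..t}"] \<tau> by auto
    then show "(?N has_real_derivative (\<Sum>\<beta>\<in>?S. 2 * tensor_entry (F \<tau>) \<beta> * tensor_rhs C (F \<tau>) \<beta>))
        (at \<tau> within {0..t})"
      unfolding tensor_sq_norm_def by (auto intro!: derivative_eq_intros sum.cong)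
    have "\<bar>\<Sum>\<beta>\<in>?S. 2 * tensor_entry (F \<tau>) \<beta> * tensor_rhs C (F \<tau>) \<beta>\<bar>
        \<le> (\<Sum>\<beta>\<in>?S. (\<Sum>j\<in>UNIV. \<Sum>l\<in>UNIV. 2 * \<bar>real (\<beta> j) * C $ j $ l\<bar>) * ?N \<tau>)"
      by (intro order_trans[OF sum_abs sum_mono] abs_tensor_entry_mult_tensor_rhs_le sym)
    also have "\<dots> = K * ?N \<tau>"
      unfolding K_def by (rule sum_distrib_right[symmetric])
    finally show "\<bar>\<Sum>\<beta>\<in>?S. 2 * tensor_entry (F \<tau>) \<beta> * tensor_rhs C (F \<tau>) \<beta>\<bar> \<le> K * ?N \<tau>" .
  qed (use \<open>0 \<le> t\<close> init in
      \<open>simp_all add: tensor_sq_norm_nonneg tensor_sq_norm_def[of m "\<lambda>_. 0"] tensor_entry_index_list\<close>)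
  with tensor_ode_solutionD(1)[OF sol \<open>0 \<le> t\<close>] show ?thesis
    by (rule sym_tensor_eq_0_if_sq_norm_eq_0)
qed

lemma tensor_ode_unique:
  fixes D E :: "real \<Rightarrow> 'n::finite list \<Rightarrow> real"
  assumes D: "tensor_ode_solution C m D" and E: "tensor_ode_solution C m E"
    and "D 0 = E 0" "0 \<le> t"
  shows "D t = E t"
proof -
  have "tensor_ode_solution C m (\<lambda>\<tau> xs. D \<tau> xs - E \<tau> xs)"
    unfolding tensor_ode_solution_def tensor_entry_diff tensor_rhs_diff
  proof (intro allI impI conjI ballI)
    fix \<tau> :: real assume "0 \<le> \<tau>"
    show "sym_tensor m (\<lambda>xs. D \<tau> xs - E \<tau> xs)"
      using tensor_ode_solutionD(1)[OF D \<open>0 \<le> \<tau>\<close>] tensor_ode_solutionD(1)[OF E \<open>0 \<le> \<tau>\<close>]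
      by (rule sym_tensor_diff)
    fix \<alpha> :: "'n \<Rightarrow> nat" assume "\<alpha> \<in> multi_indices m"
    show "((\<lambda>\<tau>. tensor_entry (D \<tau>) \<alpha> - tensor_entry (E \<tau>) \<alpha>) has_real_derivative
        tensor_rhs C (D \<tau>) \<alpha> - tensor_rhs C (E \<tau>) \<alpha>) (at \<tau> within {0..})"
      using D E \<open>0 \<le> \<tau>\<close> \<open>\<alpha> \<in> multi_indices m\<close> by (intro DERIV_diff tensor_ode_solutionD(2))
  qed
  from tensor_ode_vanishing[OF this _ \<open>0 \<le> t\<close>] \<open>D 0 = E 0\<close> show ?thesis
    by (simp add: fun_eq_iff)
qed

section \<open>Symmetric rank under linear maps\<close>

lemma sum_prod_list_linear_image:
  fixes L :: "real^'n::finite \<Rightarrow> real^'m::finite"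
    and u :: "nat \<Rightarrow> real^'n" and w :: "nat \<Rightarrow> real^'n" and xs :: "'m list"
  assumes "linear L"
    and "\<And>ys. length ys = length xs \<Longrightarrow>
      (\<Sum>k<r. a k * prod_list (map (($) (u k)) ys)) = (\<Sum>k<q. b k * prod_list (map (($) (w k)) ys))"
  shows "(\<Sum>k<r. a k * prod_list (map (($) (L (u k))) xs))
       = (\<Sum>k<q. b k * prod_list (map (($) (L (w k))) xs))"
  using assms(2)
proof (induction xs arbitrary: a b)
  case Nil
  then show ?case by simp
next
  case (Cons i xs)
  let ?M = "matrix L"
  have expand: "(\<Sum>k<p. c k * prod_list (map (($) (L (z k))) (i # xs)))
      = (\<Sum>j\<in>UNIV. ?M $ i $ j * (\<Sum>k<p. (c k * z k $ j) * prod_list (map (($) (L (z k))) xs)))"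
    for p c and z :: "nat \<Rightarrow> real^'n"
  proof -
    have "L (z k) = ?M *v z k" for k
      using fun_cong[OF matrix_vector_mul(2)[OF \<open>linear L\<close>], of "z k"] by simp
    then have "L (z k) $ i = (\<Sum>j\<in>UNIV. ?M $ i $ j * z k $ j)" for k
      by (simp add: matrix_vector_mult_def)
    then have "(\<Sum>k<p. c k * prod_list (map (($) (L (z k))) (i # xs)))
        = (\<Sum>k<p. \<Sum>j\<in>UNIV. ?M $ i $ j * ((c k * z k $ j) * prod_list (map (($) (L (z k))) xs)))"
      by (simp add: sum_distrib_left sum_distrib_right mult_ac)
    also have "\<dots> = (\<Sum>j\<in>UNIV. ?M $ i $ j * (\<Sum>k<p. (c k * z k $ j) * prod_list (map (($) (L (z k))) xs)))"
      by (subst sum.swap) (simp add: sum_distrib_left)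
    finally show ?thesis .
  qed
  have "(\<Sum>k<r. (a k * u k $ j) * prod_list (map (($) (L (u k))) xs))
      = (\<Sum>k<q. (b k * w k $ j) * prod_list (map (($) (L (w k))) xs))" for j
  proof (rule Cons.IH)
    fix ys :: "'n list" assume "length ys = length xs"
    then show "(\<Sum>k<r. (a k * u k $ j) * prod_list (map (($) (u k)) ys))
        = (\<Sum>k<q. (b k * w k $ j) * prod_list (map (($) (w k)) ys))"
      using Cons.prems[of "j # ys"] by (simp add: mult_ac)
  qed
  then show ?case
    unfolding expand by simp
qed

lemma tensor_pow_sum_linear_image:
  fixes L :: "real^'n::finite \<Rightarrow> real^'m::finite" and u w :: "nat \<Rightarrow> real^'n"
  assumes "linear L"
    and "(\<lambda>xs. \<Sum>k<r. a k * tensor_pow (u k) m xs) = (\<lambda>xs. \<Sum>k<q. b k * tensor_pow (w k) m xs)"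
  shows "(\<lambda>xs. \<Sum>k<r. a k * tensor_pow (L (u k)) m xs) = (\<lambda>xs. \<Sum>k<q. b k * tensor_pow (L (w k)) m xs)"
proof
  fix xs :: "'m list"
  show "(\<Sum>k<r. a k * tensor_pow (L (u k)) m xs) = (\<Sum>k<q. b k * tensor_pow (L (w k)) m xs)"
  proof (cases "length xs = m")
    case True
    have "(\<Sum>k<r. a k * prod_list (map (($) (u k)) ys)) = (\<Sum>k<q. b k * prod_list (map (($) (w k)) ys))"
      if "length ys = length xs" for ys
      using fun_cong[OF assms(2), of ys] that True by (simp add: tensor_pow_def)
    from sum_prod_list_linear_image[OF assms(1) this] True show ?thesis
      by (simp add: tensor_pow_def)
  next
    case False
    then show ?thesis by (simp add: tensor_pow_def)
  qed
qed

lemma sym_rank_le: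
  "sym_rank m (\<lambda>xs. \<Sum>k<s. lam k * tensor_pow (v k) m xs) \<le> s"
  unfolding sym_rank_def by (rule Least_le) blast

lemma sym_rank_linear_image_le:
  fixes L :: "real^'n::finite \<Rightarrow> real^'m::finite" and v :: "nat \<Rightarrow> real^'n"
  assumes "linear L"
  shows "sym_rank m (\<lambda>xs. \<Sum>k<s. lam k * tensor_pow (L (v k)) m xs)
       \<le> sym_rank m (\<lambda>xs. \<Sum>k<s. lam k * tensor_pow (v k) m xs)"
proof -
  let ?A = "\<lambda>xs. \<Sum>k<s. lam k * tensor_pow (v k) m xs"
  have "\<exists>(mu::nat \<Rightarrow> real) (w::nat \<Rightarrow> real^'n). ?A = (\<lambda>xs. \<Sum>k<sym_rank m ?A. mu k * tensor_pow (w k) m xs)"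
    unfolding sym_rank_def by (rule LeastI[of _ s], intro exI, rule refl)
  then obtain mu and w :: "nat \<Rightarrow> real^'n"
    where "?A = (\<lambda>xs. \<Sum>k<sym_rank m ?A. mu k * tensor_pow (w k) m xs)" by blast
  then have "(\<lambda>xs. \<Sum>k<s. lam k * tensor_pow (L (v k)) m xs)
      = (\<lambda>xs. \<Sum>k<sym_rank m ?A. mu k * tensor_pow (L (w k)) m xs)"
    by (rule tensor_pow_sum_linear_image[OF assms])
  then show ?thesis
    by (simp add: sym_rank_le)
qed

theorem theorem5p19:
  fixes C :: "real^'n^'n" and m s :: nat
    and lam :: "nat \<Rightarrow> real" and v :: "nat \<Rightarrow> real^'n"
    and D0 :: "'n list \<Rightarrow> real"
    and D :: "real \<Rightarrow> 'n list \<Rightarrow> real"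
    and vt :: "nat \<Rightarrow> real \<Rightarrow> real^'n"
  assumes condA: "condition_A C"
    and m_pos: "m \<ge> 1"
    and D0_sym: "sym_tensor m D0"
    and D0_decomp: "D0 = (\<lambda>xs. \<Sum>k<s. lam k * tensor_pow (v k) m xs)"
    and s_rank: "s = sym_rank m D0"
    and D_sym: "\<And>t. t \<ge> 0 \<Longrightarrow> sym_tensor m (D t)"
    and D_init: "D 0 = D0"
    and D_ode: "\<And>\<alpha> t. \<alpha> \<in> multi_indices m \<Longrightarrow> t \<ge> 0 \<Longrightarrow>
        ((\<lambda>\<tau>. tensor_entry (D \<tau>) \<alpha>) has_real_derivative
          (- (\<Sum>j\<in>UNIV. \<Sum>l\<in>UNIV. real (\<alpha> j) * C $ j $ l *
                 tensor_entry (D t) (idx_plus (idx_minus \<alpha> j) l))))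
        (at t within {0..})"
    and vt_ode: "\<And>k t. k < s \<Longrightarrow> t \<ge> 0 \<Longrightarrow>
        (vt k has_vector_derivative (- (C *v vt k t))) (at t within {0..})"
    and vt_init: "\<And>k. k < s \<Longrightarrow> vt k 0 = v k"
  shows "\<forall>t>0. D t = (\<lambda>xs. \<Sum>k<s. lam k * tensor_pow (vt k t) m xs)
               \<and> sym_rank m (D t) = s"
proof (intro allI impI conjI)
  fix t :: real assume "0 < t"
  define E where "E \<tau> = (\<lambda>xs. \<Sum>k<s. lam k * tensor_pow (vt k \<tau>) m xs)" for \<tau>
  have vt_sol: "linear_ode_solution (\<lambda>x. - (C *v x)) (vt k)" if "k < s" for k
    using vt_ode that unfolding linear_ode_solution_def by simp
  have "tensor_ode_solution C m D"
    using D_sym D_ode unfolding tensor_ode_solution_def tensor_rhs_def by blast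
  moreover have "tensor_ode_solution C m E"
    unfolding E_def using vt_sol by (rule tensor_ode_solution_tensor_pow_sum)
  moreover have "D 0 = E 0"
    unfolding D_init D0_decomp E_def using vt_init by simp
  ultimately show DE: "D t = E t"
    by (rule tensor_ode_unique) (use \<open>0 < t\<close> in simp)
  obtain L where "linear L" and L: "\<And>w. linear_ode_solution (\<lambda>x. - (C *v x)) w \<Longrightarrow> L (w t) = w 0"
    using linear_ode_backward_map[OF linear_compose_neg[OF matrix_vector_mul_linear] less_imp_le[OF \<open>0 < t\<close>]]
    by blast
  have "D0 = (\<lambda>xs. \<Sum>k<s. lam k * tensor_pow (L (vt k t)) m xs)"
    unfolding D0_decomp using L vt_sol vt_init by simp
  then have "s = sym_rank m (\<lambda>xs. \<Sum>k<s. lam k * tensor_pow (L (vt k t)) m xs)"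
    using s_rank by simp
  also have "\<dots> \<le> sym_rank m (D t)"
    unfolding DE E_def by (rule sym_rank_linear_image_le[OF \<open>linear L\<close>])
  finally show "sym_rank m (D t) = s"
    using sym_rank_le[where m = m and s = s and lam = lam and v = "\<lambda>k. vt k t"]
    unfolding DE E_def by linarith
qed

end
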